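(* Let $X_1,\dots,X_n$ ($n\ge 1$) and $Y$ be jointly distributed discrete random variables, $\mathbf X=(X_1,\dots,X_n)$, and let $\Pi$ be a partial information decomposition (as defined in the context) with $\Pi(\alpha)\ge 0$ for all $\alpha\in\mathcal A_n$. Then $$I_{\mathrm v}^{(0)}(\mathbf X;Y)\ \ge\ \sum_{k=2}^n I_{\mathrm r}^{(k)}(\mathbf X;Y)\qquad\text{and}\qquad I_{\mathrm r}^{(0)}(\mathbf X;Y)\ \ge\ \sum_{k=2}^n I_{\mathrm v}^{(k)}(\mathbf X;Y).$$
   Context: Notation: $[n]=\{1,\dots,n\}$. For $\mathbf a\subseteq[n]$, $X_{\mathbf a}=(X_i)_{i\in\mathbf a}$. Antichains: $\mathcal A_n$ is the set of all nonempty collections $\alpha$ of nonempty subsets of $[n]$ such that no element of $\alpha$ is a proper subset of another element of $\alpha$. Partial information decomposition (PID): any function $\Pi:\mathcal A_n\to\mathbb R$ satisfying, for every nonempty $\mathbf a\subseteq[n]$, $$I(X_{\mathbf a};Y)=\sum_{\alpha\in\mathcal A_n:\ \exists \mathbf b\in\alpha,\ \mathbf b\subseteq \mathbf a}\Pi(\alpha).$$ Degree of redundancy: $r(\alpha)=|\{i\in[n]: \{i\}\in\alpha\}|$. Degree of vulnerability: $v(\alpha)=|\{i\in[n]: i\in\mathbf b\text{ for all }\mathbf b\in\alpha\}|$. $I_{\mathrm r}^{(k)}(\mathbf X;Y)=\sum_{\alpha:\ r(\alpha)=k}\Pi(\alpha)$ and $I_{\mathrm v}^{(k)}(\mathbf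 X;Y)=\sum_{\alpha:\ v(\alpha)=k}\Pi(\alpha)$. *)

theory Defs
  imports "HOL-Probability.Probability"
begin

definition antichains :: "nat \<Rightarrow> nat set set set" where
  "antichains n = {\<alpha>. \<alpha> \<noteq> {} \<and> (\<forall>b\<in>\<alpha>. b \<noteq> {} \<and> b \<subseteq> {1..n})
                      \<and> (\<forall>b\<in>\<alpha>. \<forall>c\<in>\<alpha>. \<not> b \<subset> c)}"

definition subvec :: "(nat \<Rightarrow> 'w \<Rightarrow> 'a) \<Rightarrow> nat set \<Rightarrow> 'w \<Rightarrow> (nat \<Rightarrow> 'a)" where
  "subvec X a = (\<lambda>w. restrict (\<lambda>i. X i w) a)"

definition MI :: "'w pmf \<Rightarrow> (nat \<Rightarrow> 'w \<Rightarrow> 'a) \<Rightarrow> nat set \<Rightarrow> ('w \<Rightarrow> 'b) \<Rightarrow> real" where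
  "MI p X a Y = prob_space.mutual_information (measure_pmf p) 2
                   (count_space UNIV) (count_space UNIV) (subvec X a) Y"

definition is_PID :: "nat \<Rightarrow> 'w pmf \<Rightarrow> (nat \<Rightarrow> 'w \<Rightarrow> 'a) \<Rightarrow> ('w \<Rightarrow> 'b)
                       \<Rightarrow> (nat set set \<Rightarrow> real) \<Rightarrow> bool" where
  "is_PID n p X Y PI \<longleftrightarrow>
     (\<forall>a. a \<noteq> {} \<and> a \<subseteq> {1..n} \<longrightarrow>
        MI p X a Y = (\<Sum>\<alpha>\<in>{\<alpha>\<in>antichains n. \<exists>b\<in>\<alpha>. b \<subseteq> a}. PI \<alpha>))"

definition red_deg :: "nat \<Rightarrow> nat set set \<Rightarrow> nat" where
  "red_deg n \<alpha> = card {i\<in>{1..n}. {i} \<in> \<alpha>}"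

definition vul_deg :: "nat \<Rightarrow> nat set set \<Rightarrow> nat" where
  "vul_deg n \<alpha> = card {i\<in>{1..n}. \<forall>b\<in>\<alpha>. i \<in> b}"

definition I_r :: "nat \<Rightarrow> (nat set set \<Rightarrow> real) \<Rightarrow> nat \<Rightarrow> real" where
  "I_r n PI k = (\<Sum>\<alpha>\<in>{\<alpha>\<in>antichains n. red_deg n \<alpha> = k}. PI \<alpha>)"

definition I_v :: "nat \<Rightarrow> (nat set set \<Rightarrow> real) \<Rightarrow> nat \<Rightarrow> real" where
  "I_v n PI k = (\<Sum>\<alpha>\<in>{\<alpha>\<in>antichains n. vul_deg n \<alpha> = k}. PI \<alpha>)"

end

theory Submission
  imports Defs
begin

text \<open>Two distinct singletons \<open>{i}, {j}\<close> in an antichain have no common element, so an antichain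
  of redundancy degree at least 2 has vulnerability degree 0; dually, two elements common to all
  members exclude every singleton. Hence the atoms counted on either right-hand side form a
  subfamily of those counted on the left.\<close>

lemma finite_antichains: "finite (antichains n)"
proof (rule finite_subset)
  show "antichains n \<subseteq> Pow (Pow {1..n})"
    unfolding antichains_def by auto
qed simp

lemma two_le_card_obtains_distinct:
  assumes "2 \<le> card S"
  obtains x y where "x \<in> S" "y \<in> S" "x \<noteq> y"
proof -
  have "finite S"
    using assms card.infinite by force
  with assms have "\<not> (\<forall>x\<in>S. \<forall>y\<in>S. x = y)"
    by (simp add: card_le_Suc0_iff_eq[symmetric])
  with that show ?thesis
    by blast
qed

lemma sum_level_sets_le:
  fixes g :: "'a \<Rightarrow> 'c::ordered_comm_monoid_add"
  assumes "finite A" and "finite K"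
    and "\<And>x. x \<in> A \<Longrightarrow> 0 \<le> g x"
    and "\<And>x. x \<in> A \<Longrightarrow> f x \<in> K \<Longrightarrow> P x"
  shows "(\<Sum>k\<in>K. \<Sum>x\<in>{x\<in>A. f x = k}. g x) \<le> (\<Sum>x\<in>{x\<in>A. P x}. g x)"
proof -
  have "(\<Sum>k\<in>K. \<Sum>x\<in>{x\<in>A. f x = k}. g x) = (\<Sum>k\<in>K. \<Sum>x\<in>{x\<in>{x\<in>A. f x \<in> K}. f x = k}. g x)"
    by (intro sum.cong) auto
  also have "\<dots> = (\<Sum>x\<in>{x\<in>A. f x \<in> K}. g x)"
    using assms(1,2) by (intro sum.group) auto
  also have "\<dots> \<le> (\<Sum>x\<in>{x\<in>A. P x}. g x)"
    using assms by (intro sum_mono2) auto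
  finally show ?thesis .
qed

lemma vul_deg_eq_0_if_red_deg_ge_2:
  assumes "2 \<le> red_deg n \<alpha>"
  shows "vul_deg n \<alpha> = 0"
proof -
  obtain i j where "i \<in> {k\<in>{1..n}. {k} \<in> \<alpha>}" "j \<in> {k\<in>{1..n}. {k} \<in> \<alpha>}" "i \<noteq> j"
    using assms unfolding red_deg_def by (rule two_le_card_obtains_distinct)
  then have "{i} \<in> \<alpha>" "{j} \<in> \<alpha>" "i \<noteq> j"
    by auto
  then have "\<not> (\<forall>b\<in>\<alpha>. k \<in> b)" for k
    by (metis singletonD)
  then have "{k\<in>{1..n}. \<forall>b\<in>\<alpha>. k \<in> b} = {}"
    by simp
  then show ?thesis
    unfolding vul_deg_def by simp
qed

lemma red_deg_eq_0_if_vul_deg_ge_2: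
  assumes "2 \<le> vul_deg n \<alpha>"
  shows "red_deg n \<alpha> = 0"
proof -
  obtain i j where "i \<in> {k\<in>{1..n}. \<forall>b\<in>\<alpha>. k \<in> b}" "j \<in> {k\<in>{1..n}. \<forall>b\<in>\<alpha>. k \<in> b}" "i \<noteq> j"
    using assms unfolding vul_deg_def by (rule two_le_card_obtains_distinct)
  then have "\<forall>b\<in>\<alpha>. i \<in> b \<and> j \<in> b" "i \<noteq> j"
    by auto
  then have "{k\<in>{1..n}. {k} \<in> \<alpha>} = {}"
    by force
  then show ?thesis
    unfolding red_deg_def by simp
qed

theorem mainTheorem6:
  fixes n :: nat and p :: "'w pmf" and X :: "nat \<Rightarrow> 'w \<Rightarrow> 'a" and Y :: "'w \<Rightarrow> 'b"
    and PI :: "nat set set \<Rightarrow> real"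
  assumes "n \<ge> 1"
    and "is_PID n p X Y PI"
    and "\<forall>\<alpha>\<in>antichains n. PI \<alpha> \<ge> 0"
  shows "I_v n PI 0 \<ge> (\<Sum>k=2..n. I_r n PI k) \<and> I_r n PI 0 \<ge> (\<Sum>k=2..n. I_v n PI k)"
proof
  show "I_v n PI 0 \<ge> (\<Sum>k=2..n. I_r n PI k)"
    unfolding I_r_def I_v_def
    using finite_antichains assms(3) vul_deg_eq_0_if_red_deg_ge_2
    by (intro sum_level_sets_le) auto
  show "I_r n PI 0 \<ge> (\<Sum>k=2..n. I_v n PI k)"
    unfolding I_r_def I_v_def
    using finite_antichains assms(3) red_deg_eq_0_if_vul_deg_ge_2
    by (intro sum_level_sets_le) auto
qed

end
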